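(* Up to isomorphism there is exactly one two-dimensional evolution algebra $A$ over a field $\mathbb{K}$ such that $A^3\neq0$, $(A^2)^2\neq0$ and the annihilator $\mathrm{Ann}(A)=\{a\in A: aA=0\}$ is nonzero. Its square is $\mathfrak{D}_7\cup\mathfrak{D}_9$.
   Context: An evolution algebra over $\mathbb{K}$ is a $\mathbb{K}$-algebra with a basis $\{e_i\}$ (natural basis) such that $e_ie_j=0$ for $i\neq j$. $A^2$ is the span of $\{xy:x,y\in A\}$, $A^3$ the span of $\{xy:x\in A,y\in A^2\}$, $(A^2)^2$ the span of $\{xy:x,y\in A^2\}$. For a natural basis $\{e_1,e_2\}$ with $e_1^2=\omega_{11}e_1+\omega_{21}e_2$, $e_2^2=\omega_{12}e_1+\omega_{22}e_2$, its pseudo-square is the subset of $\{L,T,R,D\}$ where $L,T,R,D$ are present iff $\omega_{11},\omega_{12},\omega_{22},\omega_{21}$ respectively are nonzero; the square of $A$ is the set of pseudo-squares of all natural bases; $\mathfrak{D}_7=\{\{L\},\{R\}\}$, $\mathfrak{D}_9=\{\{L,D\},\{T,R\}\}$. *)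

theory Defs
  imports Complex_Main "HOL-Library.Product_Plus"
begin

definition is_algebra :: "('k::field \<Rightarrow> 'v::ab_group_add \<Rightarrow> 'v) \<Rightarrow> ('v \<Rightarrow> 'v \<Rightarrow> 'v) \<Rightarrow> bool" where
  "is_algebra s m \<longleftrightarrow> vector_space s \<and>
     (\<forall>x y z. m (x + y) z = m x z + m y z) \<and>
     (\<forall>x y z. m x (y + z) = m x y + m x z) \<and>
     (\<forall>c x y. m (s c x) y = s c (m x y)) \<and>
     (\<forall>c x y. m x (s c y) = s c (m x y))"

definition evolution_algebra :: "('k::field \<Rightarrow> 'v::ab_group_add \<Rightarrow> 'v) \<Rightarrow> ('v \<Rightarrow> 'v \<Rightarrow> 'v) \<Rightarrow> bool" where
  "evolution_algebra s m \<longleftrightarrow> is_algebra s m \<and>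
     (\<exists>B. \<not> module.dependent s B \<and> module.span s B = UNIV \<and>
          (\<forall>x\<in>B. \<forall>y\<in>B. x \<noteq> y \<longrightarrow> m x y = 0))"

definition natural_basis2 :: "('k::field \<Rightarrow> 'v::ab_group_add \<Rightarrow> 'v) \<Rightarrow> ('v \<Rightarrow> 'v \<Rightarrow> 'v) \<Rightarrow> 'v \<Rightarrow> 'v \<Rightarrow> bool" where
  "natural_basis2 s m e1 e2 \<longleftrightarrow> e1 \<noteq> e2 \<and> \<not> module.dependent s {e1, e2} \<and>
     module.span s {e1, e2} = UNIV \<and> m e1 e2 = 0 \<and> m e2 e1 = 0"

definition alg_sq :: "('k::field \<Rightarrow> 'v::ab_group_add \<Rightarrow> 'v) \<Rightarrow> ('v \<Rightarrow> 'v \<Rightarrow> 'v) \<Rightarrow> 'v set" where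
  "alg_sq s m = module.span s {m x y | x y. True}"

definition alg_cube :: "('k::field \<Rightarrow> 'v::ab_group_add \<Rightarrow> 'v) \<Rightarrow> ('v \<Rightarrow> 'v \<Rightarrow> 'v) \<Rightarrow> 'v set" where
  "alg_cube s m = module.span s {m x y | x y. y \<in> alg_sq s m}"

definition alg_sq_sq :: "('k::field \<Rightarrow> 'v::ab_group_add \<Rightarrow> 'v) \<Rightarrow> ('v \<Rightarrow> 'v \<Rightarrow> 'v) \<Rightarrow> 'v set" where
  "alg_sq_sq s m = module.span s {m x y | x y. x \<in> alg_sq s m \<and> y \<in> alg_sq s m}"

definition annihilator :: "('v \<Rightarrow> 'v \<Rightarrow> 'v::ab_group_add) \<Rightarrow> 'v set" where
  "annihilator m = {a. \<forall>x. m a x = 0}"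

definition alg_isomorphic :: "('k::field \<Rightarrow> 'v::ab_group_add \<Rightarrow> 'v) \<Rightarrow> ('v \<Rightarrow> 'v \<Rightarrow> 'v)
    \<Rightarrow> ('k \<Rightarrow> 'w::ab_group_add \<Rightarrow> 'w) \<Rightarrow> ('w \<Rightarrow> 'w \<Rightarrow> 'w) \<Rightarrow> bool" where
  "alg_isomorphic s m s' m' \<longleftrightarrow>
     (\<exists>f. bij f \<and> Vector_Spaces.linear s s' f \<and> (\<forall>x y. f (m x y) = m' (f x) (f y)))"

datatype letter = L | T | R | D

text \<open>Pseudo-square of the ordered natural basis (e1,e2), with
  e1^2 = w11 e1 + w21 e2, e2^2 = w12 e1 + w22 e2.\<close>
definition pseudo_square :: "('k::field \<Rightarrow> 'v::ab_group_add \<Rightarrow> 'v) \<Rightarrow> ('v \<Rightarrow> 'v \<Rightarrow> 'v) \<Rightarrow> 'v \<Rightarrow> 'v \<Rightarrow> letter set" where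
  "pseudo_square s m e1 e2 =
     (let w = module.representation s {e1, e2} in
       {X. (X = L \<and> w (m e1 e1) e1 \<noteq> 0) \<or> (X = T \<and> w (m e2 e2) e1 \<noteq> 0) \<or>
           (X = R \<and> w (m e2 e2) e2 \<noteq> 0) \<or> (X = D \<and> w (m e1 e1) e2 \<noteq> 0)})"

definition square_of :: "('k::field \<Rightarrow> 'v::ab_group_add \<Rightarrow> 'v) \<Rightarrow> ('v \<Rightarrow> 'v \<Rightarrow> 'v) \<Rightarrow> letter set set" where
  "square_of s m = {pseudo_square s m e1 e2 | e1 e2. natural_basis2 s m e1 e2}"

definition D7 :: "letter set set" where "D7 = {{L}, {R}}"
definition D9 :: "letter set set" where "D9 = {{L, D}, {T, R}}"

definition cor_hyps :: "('k::field \<Rightarrow> 'v::ab_group_add \<Rightarrow> 'v) \<Rightarrow> ('v \<Rightarrow> 'v \<Rightarrow> 'v) \<Rightarrow> bool" where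
  "cor_hyps s m \<longleftrightarrow> evolution_algebra s m \<and> vector_space.dim s UNIV = 2 \<and>
     alg_cube s m \<noteq> {0} \<and> alg_sq_sq s m \<noteq> {0} \<and> annihilator m \<noteq> {0}"

definition pscale :: "'k::field \<Rightarrow> 'k \<times> 'k \<Rightarrow> 'k \<times> 'k" where
  "pscale c p = (c * fst p, c * snd p)"

end

theory Submission
  imports Defs
begin

(* A natural basis diagonalises the product: (a e1 + b e2)(c e1 + d e2) = ac e1^2 + bd e2^2.
   A nonzero annihilator forces one square, say e2^2, to vanish, so A^2 is spanned by
   e1^2 = p e1 + q e2. If p = 0 then e2 annihilates A^2 and A^3 = 0; hence p \<noteq> 0, and
   f1 = e1^2 / p^2 is idempotent. So A has a natural basis with f1^2 = f1, f2^2 = 0, which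
   determines A up to isomorphism; conversely this algebra satisfies all hypotheses (so
   (A^2)^2 \<noteq> 0 is automatic). In this normal form every product is a multiple of f1, so in
   any natural basis (u, v) one vector, say u, squares to 0, while v^2 = k f1 must have a
   nonzero v-component because f1 = f1^2 is a multiple of v^2. This leaves the pseudo-squares
   {R}, {T, R} and, after swapping, {L}, {L, D}; all four occur for the bases (f1, f2),
   (f1 + f2, f2) and their swaps. *)

definition basis2 :: "('k::field \<Rightarrow> 'v::ab_group_add \<Rightarrow> 'v) \<Rightarrow> 'v \<Rightarrow> 'v \<Rightarrow> bool" where
  "basis2 s u v \<longleftrightarrow> u \<noteq> v \<and> \<not> module.dependent s {u, v} \<and> module.span s {u, v} = UNIV"

context vector_space
begin

lemma independent2_iff:
  assumes "u \<noteq> v"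
  shows "independent {u, v} \<longleftrightarrow> (\<forall>a b. a *s u + b *s v = 0 \<longrightarrow> a = 0 \<and> b = 0)"
proof -
  have "dependent {u, v} \<longleftrightarrow> (\<exists>f. (\<exists>w\<in>{u, v}. f w \<noteq> 0) \<and> (\<Sum>w\<in>{u, v}. f w *s w) = 0)"
    by (rule dependent_finite) simp
  also have "\<dots> \<longleftrightarrow> (\<exists>a b. (a \<noteq> 0 \<or> b \<noteq> 0) \<and> a *s u + b *s v = 0)"
  proof
    assume "\<exists>f. (\<exists>w\<in>{u, v}. f w \<noteq> 0) \<and> (\<Sum>w\<in>{u, v}. f w *s w) = 0"
    then obtain f where "\<exists>w\<in>{u, v}. f w \<noteq> 0" "(\<Sum>w\<in>{u, v}. f w *s w) = 0" by blast
    then show "\<exists>a b. (a \<noteq> 0 \<or> b \<noteq> 0) \<and> a *s u + b *s v = 0"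
      using assms by (intro exI[of _ "f u"] exI[of _ "f v"]) auto
  next
    assume "\<exists>a b. (a \<noteq> 0 \<or> b \<noteq> 0) \<and> a *s u + b *s v = 0"
    then obtain a b where "a \<noteq> 0 \<or> b \<noteq> 0" "a *s u + b *s v = 0" by blast
    then show "\<exists>f. (\<exists>w\<in>{u, v}. f w \<noteq> 0) \<and> (\<Sum>w\<in>{u, v}. f w *s w) = 0"
      using assms by (intro exI[of _ "\<lambda>w. if w = u then a else b"]) auto
  qed
  finally show ?thesis by blast
qed

lemma span2_eq: "span {u, v} = {a *s u + b *s v | a b. True}"
  unfolding span_insert span_singleton
proof auto
  fix x k l assume "x - k *s u = l *s v"
  then have "x = k *s u + l *s v" by (simp add: algebra_simps)
  then show "\<exists>a b. x = a *s u + b *s v" by blast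
next
  show "\<exists>k l. a *s u + b *s v - k *s u = l *s v" for a b
    by (intro exI[of _ a] exI[of _ b]) simp
qed

lemma basis2_iff:
  "basis2 scale u v \<longleftrightarrow> u \<noteq> v \<and> (\<forall>a b. a *s u + b *s v = 0 \<longrightarrow> a = 0 \<and> b = 0) \<and>
     (\<forall>x. \<exists>a b. x = a *s u + b *s v)"
  unfolding basis2_def span2_eq using independent2_iff by blast

lemma basis2_exists_coords: "basis2 scale u v \<Longrightarrow> \<exists>a b. x = a *s u + b *s v"
  unfolding basis2_iff by blast

lemma basis2_commute: "basis2 scale u v \<Longrightarrow> basis2 scale v u"
  by (auto simp: basis2_def insert_commute)

lemma basis2_scale_eq_0_iff:
  "basis2 scale u v \<Longrightarrow> a *s u + b *s v = 0 \<longleftrightarrow> a = 0 \<and> b = 0"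
  unfolding basis2_iff by auto

lemma basis2_nonzero: "basis2 scale u v \<Longrightarrow> u \<noteq> 0 \<and> v \<noteq> 0"
  using basis2_scale_eq_0_iff[of u v 1 0] basis2_scale_eq_0_iff[of u v 0 1] by auto

lemma basis2_change:
  assumes e: "basis2 scale e1 e2" and det: "a * d \<noteq> b * c"
  shows "basis2 scale (a *s e1 + b *s e2) (c *s e1 + d *s e2)"
proof -
  have lc: "x *s (a *s e1 + b *s e2) + y *s (c *s e1 + d *s e2)
      = (x * a + y * c) *s e1 + (x * b + y * d) *s e2" for x y
    by (simp add: algebra_simps)
  have det': "a * d - b * c \<noteq> 0" using det by simp
  have "a *s e1 + b *s e2 \<noteq> c *s e1 + d *s e2"
    using lc[of 1 "-1"] basis2_scale_eq_0_iff[OF e, of "a - c" "b - d"] det by auto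
  moreover have "x = 0 \<and> y = 0"
    if "x *s (a *s e1 + b *s e2) + y *s (c *s e1 + d *s e2) = 0" for x y
  proof -
    have "x * a + y * c = 0" "x * b + y * d = 0"
      using that unfolding lc basis2_scale_eq_0_iff[OF e] by auto
    then have "x * (a * d - b * c) = 0" "y * (a * d - b * c) = 0"
      by algebra+
    then show ?thesis using det' by simp
  qed
  moreover have "\<exists>x y. z = x *s (a *s e1 + b *s e2) + y *s (c *s e1 + d *s e2)" for z
  proof -
    obtain p q where z: "z = p *s e1 + q *s e2" using e unfolding basis2_iff by blast
    define x where "x = (p * d - q * c) / (a * d - b * c)"
    define y where "y = (q * a - p * b) / (a * d - b * c)"
    have "x * a + y * c = p" "x * b + y * d = q"
      unfolding x_def y_def using det' by (simp_all add: divide_simps) algebra+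
    then have "z = x *s (a *s e1 + b *s e2) + y *s (c *s e1 + d *s e2)"
      unfolding lc z by simp
    then show ?thesis by blast
  qed
  ultimately show ?thesis unfolding basis2_iff by blast
qed

lemma representation2:
  assumes "basis2 scale u v"
  shows "representation {u, v} (a *s u + b *s v) u = a \<and> representation {u, v} (a *s u + b *s v) v = b"
proof -
  let ?r = "representation {u, v} (a *s u + b *s v)"
  have uv: "u \<noteq> v" "independent {u, v}" using assms by (auto simp: basis2_def)
  have "(\<Sum>w\<in>{u, v}. ?r w *s w) = a *s u + b *s v"
    by (rule sum_representation_eq) (use uv in \<open>auto simp: span2_eq\<close>)
  then have "(?r u - a) *s u + (?r v - b) *s v = 0"
    using uv(1) by (simp add: algebra_simps)
  then show ?thesis using basis2_scale_eq_0_iff[OF assms] by simp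
qed

lemma pseudo_square_eq:
  assumes "basis2 scale u v" "m u u = a1 *s u + a2 *s v" "m v v = b1 *s u + b2 *s v"
  shows "pseudo_square scale m u v =
    {X. X = L \<and> a1 \<noteq> 0 \<or> X = T \<and> b1 \<noteq> 0 \<or> X = R \<and> b2 \<noteq> 0 \<or> X = D \<and> a2 \<noteq> 0}"
  unfolding pseudo_square_def Let_def assms(2,3)
  using representation2[OF assms(1)] by simp

end

fun swap_letter :: "letter \<Rightarrow> letter" where
  "swap_letter L = R" | "swap_letter R = L" | "swap_letter T = D" | "swap_letter D = T"

lemma swap_letter_swap_letter [simp]: "swap_letter (swap_letter X) = X"
  by (cases X) simp_all

lemma pseudo_square_swap: "pseudo_square s m v u = swap_letter ` pseudo_square s m u v"
proof (rule set_eqI)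
  fix X
  have "X \<in> pseudo_square s m v u \<longleftrightarrow> swap_letter X \<in> pseudo_square s m u v"
    by (cases X) (simp_all add: pseudo_square_def Let_def insert_commute)
  then show "X \<in> pseudo_square s m v u \<longleftrightarrow> X \<in> swap_letter ` pseudo_square s m u v"
    by (metis image_iff swap_letter_swap_letter)
qed

lemma vector_space_pscale: "vector_space pscale"
  by unfold_locales (auto simp: pscale_def algebra_simps)

lemma alg_isomorphicI_inverse:
  assumes lin: "Vector_Spaces.linear s' s h" and bij: "bij h"
    and mult: "\<And>x y. h (m' x y) = m (h x) (h y)"
  shows "alg_isomorphic s m s' m'"
  unfolding alg_isomorphic_def
proof (intro exI[of _ "inv h"] conjI allI)
  have h_inv: "h (inv h x) = x" for x using bij by (simp add: bij_is_surj surj_f_inv_f)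
  have inv_h: "inv h (h x) = x" for x using bij by (simp add: bij_is_inj)
  have vs: "vector_space s'" "vector_space s"
    and add: "h (x + y) = h x + h y" and scale: "h (s' c x) = s c (h x)" for x y c
    using lin by (simp_all add: Vector_Spaces.linear_iff)
  show "bij (inv h)" using bij by (rule bij_imp_bij_inv)
  show "Vector_Spaces.linear s s' (inv h)"
    unfolding Vector_Spaces.linear_iff
  proof (intro conjI allI)
    show "inv h (x + y) = inv h x + inv h y" for x y
      using inv_h[of "inv h x + inv h y"] by (simp add: add h_inv)
    show "inv h (s c x) = s' c (inv h x)" for c x
      using inv_h[of "s' c (inv h x)"] by (simp add: scale h_inv)
  qed (use vs in auto)
  show "inv h (m x y) = m' (inv h x) (inv h y)" for x y
    using inv_h[of "m' (inv h x) (inv h y)"] by (simp add: mult h_inv)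
qed

locale bilinear_algebra = vector_space s
  for s :: "'k::field \<Rightarrow> 'v::ab_group_add \<Rightarrow> 'v" (infixr \<open>*s\<close> 75) +
  fixes m :: "'v \<Rightarrow> 'v \<Rightarrow> 'v"
  assumes mult_add_left: "m (x + y) z = m x z + m y z"
    and mult_add_right: "m x (y + z) = m x y + m x z"
    and mult_scale_left: "m (c *s x) y = c *s m x y"
    and mult_scale_right: "m x (c *s y) = c *s m x y"

lemma is_algebra_iff_bilinear_algebra: "is_algebra s m \<longleftrightarrow> bilinear_algebra s m"
  unfolding is_algebra_def bilinear_algebra_def bilinear_algebra_axioms_def by auto

definition normal_basis2 :: "('k::field \<Rightarrow> 'v::ab_group_add \<Rightarrow> 'v) \<Rightarrow> ('v \<Rightarrow> 'v \<Rightarrow> 'v) \<Rightarrow> 'v \<Rightarrow> 'v \<Rightarrow> bool" where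
  "normal_basis2 s m f1 f2 \<longleftrightarrow> natural_basis2 s m f1 f2 \<and> m f1 f1 = f1 \<and> m f2 f2 = 0"

definition normal_mult :: "'k::field \<times> 'k \<Rightarrow> 'k \<times> 'k \<Rightarrow> 'k \<times> 'k" where
  "normal_mult x y = (fst x * fst y, 0)"

context bilinear_algebra
begin

lemma natural_basis2_iff: "natural_basis2 s m u v \<longleftrightarrow> basis2 s u v \<and> m u v = 0 \<and> m v u = 0"
  by (auto simp: natural_basis2_def basis2_def)

lemma natural_basis2_commute: "natural_basis2 s m u v \<Longrightarrow> natural_basis2 s m v u"
  by (auto simp: natural_basis2_iff basis2_commute)

lemma mult_natural_basis2:
  assumes "natural_basis2 s m e1 e2"
  shows "m (a *s e1 + b *s e2) (c *s e1 + d *s e2) = (a * c) *s m e1 e1 + (b * d) *s m e2 e2"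
  using assms by (simp add: natural_basis2_iff mult_add_left mult_add_right
      mult_scale_left mult_scale_right mult.commute)

lemma exists_natural_basis2:
  assumes "evolution_algebra s m" "dim UNIV = 2"
  shows "\<exists>e1 e2. natural_basis2 s m e1 e2"
proof -
  obtain B where B: "independent B" "span B = UNIV" "\<forall>x\<in>B. \<forall>y\<in>B. x \<noteq> y \<longrightarrow> m x y = 0"
    using assms(1) unfolding evolution_algebra_def by blast
  have "card B = 2" using dim_eq_card[of B UNIV] B assms(2) by simp
  then obtain e1 e2 where "B = {e1, e2}" "e1 \<noteq> e2" by (meson card_2_iff)
  then have "natural_basis2 s m e1 e2" using B unfolding natural_basis2_def by simp
  then show ?thesis by blast
qed

lemma mult_zero_left [simp]: "m 0 y = 0"
  using mult_add_left[of 0 0 y] by simp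

lemma square_zero_if_annihilator_nonzero:
  assumes nb: "natural_basis2 s m e1 e2" and ann: "annihilator m \<noteq> {0}"
  shows "m e1 e1 = 0 \<or> m e2 e2 = 0"
proof -
  have e: "basis2 s e1 e2" using nb by (simp add: natural_basis2_iff)
  have "0 \<in> annihilator m" by (simp add: annihilator_def)
  then obtain x where x: "x \<in> annihilator m" "x \<noteq> 0" using ann by blast
  obtain a b where xab: "x = a *s e1 + b *s e2" using basis2_exists_coords[OF e] by blast
  have "a *s m e1 e1 = 0" "b *s m e2 e2 = 0"
    using mult_natural_basis2[OF nb, of a b 1 0] mult_natural_basis2[OF nb, of a b 0 1] x(1)
    unfolding xab annihilator_def by simp_all
  moreover have "a \<noteq> 0 \<or> b \<noteq> 0" using x(2) xab by auto
  ultimately show ?thesis by auto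
qed

lemma alg_cube_eq_0:
  assumes nb: "natural_basis2 s m e1 e2" and e1: "m e1 e1 = q *s e2" and e2: "m e2 e2 = 0"
  shows "alg_cube s m = {0}"
proof -
  have e: "basis2 s e1 e2" using nb by (simp add: natural_basis2_iff)
  have "m x y \<in> span {e2}" for x y
  proof -
    obtain a b c d where "x = a *s e1 + b *s e2" "y = c *s e1 + d *s e2"
      using basis2_exists_coords[OF e] by metis
    then have "m x y = (a * c * q) *s e2"
      by (simp add: mult_natural_basis2[OF nb] e1 e2)
    then show ?thesis by (simp add: span_singleton image_iff)
  qed
  then have sq: "alg_sq s m \<subseteq> span {e2}"
    unfolding alg_sq_def by (intro span_minimal) (auto simp: subspace_span)
  have "m x y = 0" if "y \<in> alg_sq s m" for x y
  proof -
    have "y \<in> span {e2}" using sq that by blast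
    then obtain k where y: "y = 0 *s e1 + k *s e2" by (auto simp: span_singleton)
    obtain a b where x: "x = a *s e1 + b *s e2" using basis2_exists_coords[OF e] by blast
    show ?thesis unfolding x y mult_natural_basis2[OF nb] e2 by simp
  qed
  then have "alg_cube s m \<subseteq> span {0}"
    unfolding alg_cube_def by (intro span_mono) blast
  then show ?thesis using span_zero[of "{m x y |x y. y \<in> alg_sq s m}"]
    unfolding alg_cube_def by auto
qed

lemma exists_normal_basis2:
  assumes nb: "natural_basis2 s m e1 e2" and e2: "m e2 e2 = 0" and cube: "alg_cube s m \<noteq> {0}"
  shows "\<exists>f1 f2. normal_basis2 s m f1 f2"
proof -
  have e: "basis2 s e1 e2" using nb by (simp add: natural_basis2_iff)
  obtain p q where e1: "m e1 e1 = p *s e1 + q *s e2" using basis2_exists_coords[OF e] by blast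
  have "p \<noteq> 0"
  proof
    assume "p = 0"
    then have "m e1 e1 = q *s e2" using e1 by simp
    then show False using alg_cube_eq_0[OF nb _ e2] cube by blast
  qed
  \<comment> \<open>\<open>f1 = e1\<^sup>2 / p\<^sup>2\<close>\<close>
  define f1 where "f1 = (1 / p) *s e1 + (q / p\<^sup>2) *s e2"
  have "m f1 f1 = (1 / p * (1 / p)) *s m e1 e1"
    unfolding f1_def mult_natural_basis2[OF nb] e2 by simp
  also have "\<dots> = (1 / p * (1 / p) * p) *s e1 + (1 / p * (1 / p) * q) *s e2"
    unfolding e1 by (simp add: scale_right_distrib)
  also have "\<dots> = f1"
    unfolding f1_def using \<open>p \<noteq> 0\<close> by (simp add: power2_eq_square)
  finally have f1: "m f1 f1 = f1" .
  have "basis2 s f1 e2"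
    using basis2_change[OF e, of "1 / p" 1 "q / p\<^sup>2" 0] \<open>p \<noteq> 0\<close> unfolding f1_def by simp
  moreover have "m f1 e2 = 0" "m e2 f1 = 0"
    using mult_natural_basis2[OF nb, of _ _ 0 1] mult_natural_basis2[OF nb, of 0 1]
    unfolding f1_def by (simp_all add: e2)
  ultimately show ?thesis using f1 e2 unfolding normal_basis2_def natural_basis2_iff by blast
qed

lemma mult_normal_basis2:
  assumes "normal_basis2 s m f1 f2"
  shows "m (a *s f1 + b *s f2) (c *s f1 + d *s f2) = (a * c) *s f1"
  using assms mult_natural_basis2 by (simp add: normal_basis2_def)

lemma cor_hyps_if_normal_basis2:
  assumes f: "normal_basis2 s m f1 f2"
  shows "cor_hyps s m"
proof -
  have nb: "natural_basis2 s m f1 f2" and f1: "m f1 f1 = f1"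
    using f by (simp_all add: normal_basis2_def)
  have e: "basis2 s f1 f2" using nb by (simp add: natural_basis2_iff)
  have "evolution_algebra s m"
    unfolding evolution_algebra_def is_algebra_iff_bilinear_algebra
    using bilinear_algebra_axioms nb unfolding natural_basis2_def
    by (intro conjI exI[of _ "{f1, f2}"]) auto
  moreover have "dim UNIV = 2"
    using dim_eq_card[of "{f1, f2}" UNIV] e by (simp add: basis2_def)
  moreover have f1': "f1 = m f1 f1" using f1 by simp
  have sq: "f1 \<in> alg_sq s m" unfolding alg_sq_def using f1' by (intro span_base) blast
  have "f1 \<in> alg_cube s m" "f1 \<in> alg_sq_sq s m"
    unfolding alg_cube_def alg_sq_sq_def using sq f1' by (auto intro: span_base)
  moreover have "f2 \<in> annihilator m"
  proof -
    have "m f2 x = 0" for x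
    proof -
      obtain a b where x: "x = a *s f1 + b *s f2" using basis2_exists_coords[OF e] by blast
      show ?thesis using mult_normal_basis2[OF f, of 0 1 a b] unfolding x by simp
    qed
    then show ?thesis by (simp add: annihilator_def)
  qed
  ultimately show ?thesis using basis2_nonzero[OF e] unfolding cor_hyps_def by blast
qed

lemma alg_isomorphic_if_normal_basis2:
  assumes f: "normal_basis2 s m f1 f2"
  shows "alg_isomorphic s m pscale normal_mult"
proof -
  define h where "h p = fst p *s f1 + snd p *s f2" for p
  have e: "basis2 s f1 f2" using f by (simp add: normal_basis2_def natural_basis2_iff)
  have "Vector_Spaces.linear pscale s h"
    unfolding Vector_Spaces.linear_iff
  proof (intro conjI allI)
    show "vector_space pscale" by (rule vector_space_pscale)
    show "vector_space s" by (rule vector_space_axioms)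
    show "h (x + y) = h x + h y" for x y
      unfolding h_def by (simp add: scale_left_distrib)
    show "h (pscale c x) = c *s h x" for c x
      unfolding h_def pscale_def by (simp add: scale_right_distrib)
  qed
  moreover have "inj h"
  proof (rule injI)
    fix x y assume "h x = h y"
    then have "(fst x - fst y) *s f1 + (snd x - snd y) *s f2 = 0"
      unfolding h_def by (simp add: algebra_simps)
    then show "x = y" using basis2_scale_eq_0_iff[OF e] by (simp add: prod_eq_iff)
  qed
  moreover have "surj h"
  proof -
    have "z \<in> range h" for z
    proof -
      obtain a b where "z = a *s f1 + b *s f2" using basis2_exists_coords[OF e] by blast
      then have "z = h (a, b)" unfolding h_def by simp
      then show ?thesis by blast
    qed
    then show ?thesis by blast
  qed
  moreover have "h (normal_mult x y) = m (h x) (h y)" for x y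
    unfolding h_def normal_mult_def mult_normal_basis2[OF f] by simp
  ultimately show ?thesis by (intro alg_isomorphicI_inverse) (auto simp: bij_def)
qed

lemma square_zero_cases_if_normal_basis2:
  assumes f: "normal_basis2 s m f1 f2" and uv: "natural_basis2 s m u v"
  shows "m u u = 0 \<or> m v v = 0"
proof -
  have ef: "basis2 s f1 f2" using f by (simp add: normal_basis2_def natural_basis2_iff)
  obtain a b c d where u: "u = a *s f1 + b *s f2" and v: "v = c *s f1 + d *s f2"
    using basis2_exists_coords[OF ef] by metis
  have "m u v = 0" using uv by (simp add: natural_basis2_iff)
  then have "(a * c) *s f1 = 0" unfolding u v mult_normal_basis2[OF f] .
  then have "a = 0 \<or> c = 0" using basis2_nonzero[OF ef] by simp
  then show ?thesis unfolding u v mult_normal_basis2[OF f] by auto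
qed

lemma pseudo_square_if_square_zero:
  assumes f: "normal_basis2 s m f1 f2" and uv: "natural_basis2 s m u v" and u: "m u u = 0"
  shows "pseudo_square s m u v \<in> {{R}, {T, R}}"
proof -
  have ef: "basis2 s f1 f2" and f1: "m f1 f1 = f1"
    using f by (simp_all add: normal_basis2_def natural_basis2_iff)
  have e: "basis2 s u v" using uv by (simp add: natural_basis2_iff)
  obtain \<alpha> \<beta> where f1_uv: "f1 = \<alpha> *s u + \<beta> *s v" using basis2_exists_coords[OF e] by blast
  obtain c d where v: "v = c *s f1 + d *s f2" using basis2_exists_coords[OF ef] by blast
  define k where "k = c * c"
  have vv: "m v v = k *s f1" unfolding k_def by (subst (1 2) v) (rule mult_normal_basis2[OF f])
  have "f1 = m f1 f1" using f1 by simp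
  also have "\<dots> = (\<beta> * \<beta>) *s m v v"
    by (subst (1 2) f1_uv) (simp add: mult_natural_basis2[OF uv] u)
  finally have "(\<beta> * \<beta> * k) *s f1 = 1 *s f1" using vv by simp
  then have "\<beta> * \<beta> * k = 1"
    using scale_cancel_right[of "\<beta> * \<beta> * k" f1 1] basis2_nonzero[OF ef] by simp
  then have "k * \<beta> \<noteq> 0" by auto
  have "m u u = 0 *s u + 0 *s v" using u by simp
  moreover have "m v v = (k * \<alpha>) *s u + (k * \<beta>) *s v"
    unfolding vv by (subst f1_uv) (simp add: scale_right_distrib)
  ultimately have "pseudo_square s m u v = {X. X = L \<and> (0::'k) \<noteq> 0 \<or> X = T \<and> k * \<alpha> \<noteq> 0 \<or>
      X = R \<and> k * \<beta> \<noteq> 0 \<or> X = D \<and> (0::'k) \<noteq> 0}"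
    by (rule pseudo_square_eq[OF e, where m = m])
  then show ?thesis using \<open>k * \<beta> \<noteq> 0\<close> by (cases "k * \<alpha> = 0") auto
qed

lemma square_of_subset_if_normal_basis2:
  assumes f: "normal_basis2 s m f1 f2"
  shows "square_of s m \<subseteq> D7 \<union> D9"
proof
  fix P assume "P \<in> square_of s m"
  then obtain u v where uv: "natural_basis2 s m u v" and P: "P = pseudo_square s m u v"
    unfolding square_of_def by blast
  from square_zero_cases_if_normal_basis2[OF f uv] show "P \<in> D7 \<union> D9"
  proof
    assume "m u u = 0"
    then show ?thesis using pseudo_square_if_square_zero[OF f uv] P by (auto simp: D7_def D9_def)
  next
    assume "m v v = 0"
    then have "pseudo_square s m v u \<in> {{R}, {T, R}}"
      using pseudo_square_if_square_zero[OF f natural_basis2_commute[OF uv]] by blast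
    then show ?thesis using pseudo_square_swap[of s m u v] P by (auto simp: D7_def D9_def)
  qed
qed

lemma pseudo_square_normal_basis2:
  assumes f: "normal_basis2 s m f1 f2"
  shows "pseudo_square s m f1 f2 = {L}"
proof -
  have ef: "basis2 s f1 f2" using f by (simp add: normal_basis2_def natural_basis2_iff)
  have "m f1 f1 = 1 *s f1 + 0 *s f2" "m f2 f2 = 0 *s f1 + 0 *s f2"
    using f by (simp_all add: normal_basis2_def)
  from pseudo_square_eq[OF ef, where m = m, OF this] show ?thesis by auto
qed

lemma pseudo_square_shear_normal_basis2:
  assumes f: "normal_basis2 s m f1 f2"
  shows "natural_basis2 s m (f1 + f2) f2 \<and> pseudo_square s m (f1 + f2) f2 = {L, D}"
proof -
  have ef: "basis2 s f1 f2" and f2: "m f2 f2 = 0"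
    using f by (simp_all add: normal_basis2_def natural_basis2_iff)
  have "basis2 s (1 *s f1 + 1 *s f2) (0 *s f1 + 1 *s f2)"
    by (rule basis2_change[OF ef]) simp
  then have eg: "basis2 s (f1 + f2) f2" by simp
  have "m (1 *s f1 + 1 *s f2) (0 *s f1 + 1 *s f2) = 0"
    "m (0 *s f1 + 1 *s f2) (1 *s f1 + 1 *s f2) = 0"
    "m (1 *s f1 + 1 *s f2) (1 *s f1 + 1 *s f2) = f1"
    unfolding mult_normal_basis2[OF f] by simp_all
  then have "m (f1 + f2) f2 = 0" "m f2 (f1 + f2) = 0" "m (f1 + f2) (f1 + f2) = f1"
    by simp_all
  moreover have "m (f1 + f2) (f1 + f2) = 1 *s (f1 + f2) + (- 1) *s f2"
    "m f2 f2 = 0 *s (f1 + f2) + 0 *s f2"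
    using calculation f2 by simp_all
  then have "pseudo_square s m (f1 + f2) f2 = {X. X = L \<and> (1::'k) \<noteq> 0 \<or> X = T \<and> (0::'k) \<noteq> 0 \<or>
      X = R \<and> (0::'k) \<noteq> 0 \<or> X = D \<and> (- 1::'k) \<noteq> 0}"
    by (rule pseudo_square_eq[OF eg, where m = m])
  ultimately show ?thesis using eg by (auto simp: natural_basis2_iff)
qed

lemma square_of_eq_if_normal_basis2:
  assumes f: "normal_basis2 s m f1 f2"
  shows "square_of s m = D7 \<union> D9"
proof
  have nb: "natural_basis2 s m f1 f2" using f by (simp add: normal_basis2_def)
  have ps: "pseudo_square s m f1 f2 = {L}" by (rule pseudo_square_normal_basis2[OF f])
  have nb': "natural_basis2 s m (f1 + f2) f2" and ps': "pseudo_square s m (f1 + f2) f2 = {L, D}"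
    using pseudo_square_shear_normal_basis2[OF f] by simp_all
  have "pseudo_square s m f2 f1 = {R}" "pseudo_square s m f2 (f1 + f2) = {T, R}"
    using pseudo_square_swap[of s m f2 f1] pseudo_square_swap[of s m f2 "f1 + f2"]
    unfolding ps ps' by (simp_all add: insert_commute)
  then show "D7 \<union> D9 \<subseteq> square_of s m"
    using nb nb' natural_basis2_commute[OF nb] natural_basis2_commute[OF nb'] ps ps'
    unfolding square_of_def D7_def D9_def by blast
qed (rule square_of_subset_if_normal_basis2[OF f])

end

lemma bilinear_algebra_normal_mult: "bilinear_algebra (pscale :: 'k::field \<Rightarrow> _) normal_mult"
  unfolding bilinear_algebra_def bilinear_algebra_axioms_def
  using vector_space_pscale by (simp add: normal_mult_def pscale_def algebra_simps)

lemma normal_basis2_normal_mult: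
  "normal_basis2 (pscale :: 'k::field \<Rightarrow> _) normal_mult (1, 0) (0, 1)"
proof -
  interpret bilinear_algebra pscale normal_mult by (rule bilinear_algebra_normal_mult)
  have "x = pscale (fst x) (1, 0) + pscale (snd x) (0, 1)" for x :: "'k \<times> 'k"
    by (simp add: pscale_def prod_eq_iff)
  then have "basis2 pscale (1, 0) (0, 1)"
    unfolding basis2_iff by (auto simp: pscale_def zero_prod_def)
  then show ?thesis by (simp add: normal_basis2_def natural_basis2_iff normal_mult_def zero_prod_def)
qed

lemma cor_hyps_iff_normal_basis2:
  "cor_hyps s m \<longleftrightarrow> bilinear_algebra s m \<and> (\<exists>f1 f2. normal_basis2 s m f1 f2)"
proof
  assume h: "cor_hyps s m"
  then interpret bilinear_algebra s m
    by (simp add: cor_hyps_def evolution_algebra_def is_algebra_iff_bilinear_algebra)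
  obtain e1 e2 where "natural_basis2 s m e1 e2"
    using h exists_natural_basis2 unfolding cor_hyps_def by blast
  moreover have "m e1 e1 = 0 \<or> m e2 e2 = 0"
    using square_zero_if_annihilator_nonzero[OF calculation] h by (simp add: cor_hyps_def)
  ultimately obtain e1' e2' where "natural_basis2 s m e1' e2'" "m e2' e2' = 0"
    using natural_basis2_commute by blast
  then show "bilinear_algebra s m \<and> (\<exists>f1 f2. normal_basis2 s m f1 f2)"
    using exists_normal_basis2 h bilinear_algebra_axioms by (simp add: cor_hyps_def)
next
  assume "bilinear_algebra s m \<and> (\<exists>f1 f2. normal_basis2 s m f1 f2)"
  then show "cor_hyps s m" using bilinear_algebra.cor_hyps_if_normal_basis2 by blast
qed

theorem corollary3p14:
  fixes dummy :: "'k::field"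
  shows "(\<exists>m0 :: 'k \<times> 'k \<Rightarrow> 'k \<times> 'k \<Rightarrow> 'k \<times> 'k. cor_hyps pscale m0 \<and>
           (\<forall>(s :: 'k \<Rightarrow> 'v::ab_group_add \<Rightarrow> 'v) m. cor_hyps s m \<longrightarrow> alg_isomorphic s m pscale m0))
       \<and> (\<forall>(s :: 'k \<Rightarrow> 'v \<Rightarrow> 'v) m. cor_hyps s m \<longrightarrow> square_of s m = D7 \<union> D9)"
proof (intro conjI exI[of _ normal_mult] allI impI)
  show "cor_hyps pscale (normal_mult :: 'k \<times> 'k \<Rightarrow> _)"
    using bilinear_algebra_normal_mult normal_basis2_normal_mult
    unfolding cor_hyps_iff_normal_basis2 by blast
next
  fix s :: "'k \<Rightarrow> 'v \<Rightarrow> 'v" and m assume "cor_hyps s m"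
  then obtain f1 f2 where "bilinear_algebra s m" "normal_basis2 s m f1 f2"
    unfolding cor_hyps_iff_normal_basis2 by blast
  then show "alg_isomorphic s m pscale normal_mult"
    by (rule bilinear_algebra.alg_isomorphic_if_normal_basis2)
next
  fix s :: "'k \<Rightarrow> 'v \<Rightarrow> 'v" and m assume "cor_hyps s m"
  then obtain f1 f2 where "bilinear_algebra s m" "normal_basis2 s m f1 f2"
    unfolding cor_hyps_iff_normal_basis2 by blast
  then show "square_of s m = D7 \<union> D9"
    by (rule bilinear_algebra.square_of_eq_if_normal_basis2)
qed

end
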